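(* In every execution of the protocol Fever, let $v$ be an initial view and let $\mathtt t$ be the first time at which any correct processor enters a view $\ge v$. Then: (i) some correct processor enters view $v$ at time $\mathtt t$; (ii) no correct processor enters any view $v'>v$ at time $\mathtt t$; (iii) $c(p)\le\mathtt c_v$ for every correct processor $p$ at time $\mathtt t$.
   Context: Model. There is a set $\Pi=\{p_0,\dots,p_{n-1}\}$ of $n$ processors, and $t$ is the largest integer $<n/3$. At most $t$ processors are Byzantine (arbitrary behaviour); the others are correct. Authenticated channels, unforgeable signatures and threshold signatures are assumed. Partial synchrony holds with a known $\Delta$ and an unknown $GST$. Each processor $p$ has a local clock $c(p)$. All clocks advance at the same rate as real time, except when the protocol forwards them. Partial initial clock synchronisation holds: for every correct $p$, at the start at least $t+1$ correct processors $p'$ satisfy $c(p')\ge c(p)-\Gamma$, for a known $\Gamma\ge2\Delta$. Underlying protocol. Views $v\in\mathbb N_{\ge0}$; a fixed integer $k\ge3$; $\mathtt{lead}(v)=p_i$ with $i=\lfloor v/k\rfloor\bmod n$; $v$ is initial iff $v\bmod k=0$. A quorum certificate (QC) for view $v$ is a threshold signature of $n-t$ distinct processors, and a correct processor contributes to a QC for view $v$ only while in view $v$. Protocol Fever. Set $\mathtt c_v=\Gamma v$. Each correct processor $p$ keeps a current view (initially $0$) and behaves as follows. (a) When $c(p)=\mathtt c_v$ for an initial view $v$, $p$ enters view $v$ and sends a $\mathtt{view}\ v$ message (the value $v$ signed by $p$) to $\mathtt{lead}(v)$. (b) Upon first seeing a QC for a view $v'$ at least its current view, $p$ enters view $v'+1$,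 and if $c(p)<\mathtt c_{v'+1}$ it sets $c(p):=\mathtt c_{v'+1}$. (c) Upon first seeing a view certificate (VC) for an initial view $v'$ greater than its current view, $p$ enters view $v'$, and if $c(p)<\mathtt c_{v'}$ it sets $c(p):=\mathtt c_{v'}$. (d) If $p=\mathtt{lead}(v')$ for some $v'$ at least its current view, then upon first receiving $\mathtt{view}\ v'$ messages from $t+1$ distinct processors, $p$ combines them into a threshold signature, the VC for view $v'$, and sends it to all processors (including itself). *)

theory Defs
  imports Complex_Main
begin

text \<open>
  Processors are the naturals below n (the set Pi).
\<close>

record params =
  nproc   :: nat
  kk      :: nat
  gam     :: real
  dlt     :: real
  gst     :: real         \<comment> \<open>GST (unknown to the processors)\<close>
  correct :: "nat set"

definition tmax :: "nat \<Rightarrow> nat" where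
  "tmax n = (GREATEST t. 3 * t < n)"

definition lead :: "nat \<Rightarrow> nat \<Rightarrow> nat \<Rightarrow> nat" where
  "lead n k v = (v div k) mod n"

definition initial :: "nat \<Rightarrow> nat \<Rightarrow> bool" where
  "initial k v \<longleftrightarrow> v mod k = 0"

definition cview :: "real \<Rightarrow> nat \<Rightarrow> real" where
  "cview G v = G * real v"

definition valid_params :: "params \<Rightarrow> bool" where
  "valid_params P \<longleftrightarrow>
     1 \<le> nproc P \<and> 3 \<le> kk P \<and>
     correct P \<subseteq> {..<nproc P} \<and>
     card ({..<nproc P} - correct P) \<le> tmax (nproc P) \<and>
     0 < dlt P \<and> 2 * dlt P \<le> gam P"

datatype payload =
    MView nat nat          \<comment> \<open>MView w q: the value w signed by q (a "view w" message)\<close>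
  | MVote nat nat          \<comment> \<open>MVote w q: q's signature share contributing to a QC for view w\<close>
  | MQC nat "nat set"      \<comment> \<open>MQC w S: QC for view w, threshold signature of the signers S\<close>
  | MVC nat "nat set"      \<comment> \<open>MVC w S: VC for view w, threshold signature of the signers S\<close>

record msg =
  src   :: nat
  dst   :: nat
  pay   :: payload
  stime :: real

record cfg =
  now     :: real
  clk     :: "nat \<Rightarrow> real"
  cur     :: "nat \<Rightarrow> nat"
  fired   :: "nat \<Rightarrow> nat set"              \<comment> \<open>initial views for which rule (a) has been executed\<close>
  seenQC  :: "nat \<Rightarrow> nat set"
  seenVC  :: "nat \<Rightarrow> nat set"
  qcs     :: "nat \<Rightarrow> (nat \<times> nat set) set"
  votes   :: "nat \<Rightarrow> nat \<Rightarrow> nat set"        \<comment> \<open>signers of QC shares for view w received by p\<close>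
  vrecv   :: "nat \<Rightarrow> nat \<Rightarrow> nat set"        \<comment> \<open>signers of view w messages received by p\<close>
  adv     :: "payload set"                 \<comment> \<open>payloads received by Byzantine processors\<close>
  transit :: "msg set"
  entered :: "(nat \<times> nat \<times> real) set"      \<comment> \<open>(p, w, tau): p entered view w at time tau\<close>

definition send :: "nat \<Rightarrow> nat \<Rightarrow> payload \<Rightarrow> cfg \<Rightarrow> cfg" where
  "send p q pl \<sigma> = \<sigma>\<lparr>transit := insert \<lparr>src = p, dst = q, pay = pl, stime = now \<sigma>\<rparr> (transit \<sigma>)\<rparr>"

definition enter :: "nat \<Rightarrow> nat \<Rightarrow> real \<Rightarrow> cfg \<Rightarrow> cfg" where
  "enter p w c \<sigma> = \<sigma>\<lparr>cur := (cur \<sigma>)(p := w), clk := (clk \<sigma>)(p := c),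
                      entered := insert (p, w, now \<sigma>) (entered \<sigma>)\<rparr>"

definition see_qc :: "params \<Rightarrow> nat \<Rightarrow> nat \<Rightarrow> nat set \<Rightarrow> cfg \<Rightarrow> cfg" where
  "see_qc P p w S \<sigma> =
    (let \<sigma>1 = \<sigma>\<lparr>qcs := (qcs \<sigma>)(p := insert (w, S) (qcs \<sigma> p))\<rparr> in
     if w \<in> seenQC \<sigma> p then \<sigma>1
     else (let \<sigma>2 = \<sigma>1\<lparr>seenQC := (seenQC \<sigma>)(p := insert w (seenQC \<sigma> p))\<rparr> in
           if cur \<sigma> p \<le> w
           then enter p (Suc w) (max (clk \<sigma> p) (cview (gam P) (Suc w))) \<sigma>2
           else \<sigma>2))"

definition see_vc :: "params \<Rightarrow> nat \<Rightarrow> nat \<Rightarrow> cfg \<Rightarrow> cfg" where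
  "see_vc P p w \<sigma> =
    (if \<not> initial (kk P) w \<or> w \<in> seenVC \<sigma> p then \<sigma>
     else (let \<sigma>1 = \<sigma>\<lparr>seenVC := (seenVC \<sigma>)(p := insert w (seenVC \<sigma> p))\<rparr> in
           if cur \<sigma> p < w
           then enter p w (max (clk \<sigma> p) (cview (gam P) w)) \<sigma>1
           else \<sigma>1))"

definition recv_view :: "params \<Rightarrow> nat \<Rightarrow> nat \<Rightarrow> nat \<Rightarrow> cfg \<Rightarrow> cfg" where
  "recv_view P p w q \<sigma> =
    (let n = nproc P; R = vrecv \<sigma> p w; R' = insert q R;
         \<sigma>1 = \<sigma>\<lparr>vrecv := (vrecv \<sigma>)(p := (vrecv \<sigma> p)(w := R'))\<rparr> in
     if p = lead n (kk P) w \<and> cur \<sigma> p \<le> w \<and> card R < tmax n + 1 \<and> tmax n + 1 \<le> card R'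
     then \<sigma>1\<lparr>transit := transit \<sigma>1 \<union>
              {\<lparr>src = p, dst = q', pay = MVC w R', stime = now \<sigma>\<rparr> | q'. q' < n}\<rparr>
     else \<sigma>1)"

text \<open>Correct p receives a message with payload pl (signatures by non-processors are invalid).\<close>
definition recv :: "params \<Rightarrow> nat \<Rightarrow> payload \<Rightarrow> cfg \<Rightarrow> cfg" where
  "recv P p pl \<sigma> =
    (let n = nproc P in
     case pl of
       MView w q \<Rightarrow> if q < n then recv_view P p w q \<sigma> else \<sigma>
     | MVote w q \<Rightarrow> if q < n then \<sigma>\<lparr>votes := (votes \<sigma>)(p := (votes \<sigma> p)(w := insert q (votes \<sigma> p w)))\<rparr>
                    else \<sigma>
     | MQC w S \<Rightarrow> if S \<subseteq> {..<n} \<and> n - tmax n \<le> card S then see_qc P p w S \<sigma> else \<sigma>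
     | MVC w S \<Rightarrow> if S \<subseteq> {..<n} \<and> tmax n + 1 \<le> card S then see_vc P p w \<sigma> else \<sigma>)"

text \<open>Payloads the Byzantine processors are able to produce (unforgeable signatures):
  they need every signature of a correct processor they use.\<close>
definition forgeable :: "params \<Rightarrow> cfg \<Rightarrow> payload \<Rightarrow> bool" where
  "forgeable P \<sigma> pl =
    (case pl of
       MView w q \<Rightarrow> q \<notin> correct P \<or> pl \<in> adv \<sigma>
     | MVote w q \<Rightarrow> q \<notin> correct P \<or> pl \<in> adv \<sigma>
     | MQC w S \<Rightarrow> pl \<in> adv \<sigma> \<or> (\<forall>q \<in> S \<inter> correct P. MVote w q \<in> adv \<sigma>)
     | MVC w S \<Rightarrow> pl \<in> adv \<sigma> \<or> (\<forall>q \<in> S \<inter> correct P. MView w q \<in> adv \<sigma>))"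

inductive step :: "params \<Rightarrow> cfg \<Rightarrow> cfg \<Rightarrow> bool" for P where
  \<comment> \<open>time passes; clocks advance at the rate of real time; no clock may pass an initial-view
      time c_w without rule (a) being executed; partial synchrony bounds message delays\<close>
  tick: "\<lbrakk> 0 < d;
          \<forall>p\<in>correct P. \<forall>w. initial (kk P) w \<longrightarrow>
             \<not> (clk \<sigma> p < cview (gam P) w \<and> cview (gam P) w < clk \<sigma> p + d);
          \<forall>p\<in>correct P. \<forall>w. initial (kk P) w \<and> clk \<sigma> p = cview (gam P) w \<longrightarrow> w \<in> fired \<sigma> p;
          \<forall>m\<in>transit \<sigma>. now \<sigma> + d \<le> max (gst P) (stime m) + dlt P \<rbrakk>
        \<Longrightarrow> step P \<sigma> (\<sigma>\<lparr>now := now \<sigma> + d, clk := (\<lambda>p. clk \<sigma> p + d)\<rparr>)"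
| clock: "\<lbrakk> p \<in> correct P; initial (kk P) w; clk \<sigma> p = cview (gam P) w; w \<notin> fired \<sigma> p \<rbrakk>
        \<Longrightarrow> step P \<sigma> (send p (lead (nproc P) (kk P) w) (MView w p)
                      (enter p w (clk \<sigma> p) (\<sigma>\<lparr>fired := (fired \<sigma>)(p := insert w (fired \<sigma> p))\<rparr>)))"
| deliver: "\<lbrakk> m \<in> transit \<sigma>; stime m < now \<sigma> \<rbrakk>
        \<Longrightarrow> step P \<sigma> (if dst m \<in> correct P
                      then recv P (dst m) (pay m) (\<sigma>\<lparr>transit := transit \<sigma> - {m}\<rparr>)
                      else \<sigma>\<lparr>transit := transit \<sigma> - {m}, adv := insert (pay m) (adv \<sigma>)\<rparr>)"
  \<comment> \<open>underlying protocol: a correct processor contributes to a QC only for its current view\<close>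
| vote: "\<lbrakk> p \<in> correct P; q < nproc P \<rbrakk>
        \<Longrightarrow> step P \<sigma> (send p q (MVote (cur \<sigma> p) p) \<sigma>)"
| relay: "\<lbrakk> p \<in> correct P; (w, S) \<in> qcs \<sigma> p; q < nproc P \<rbrakk>
        \<Longrightarrow> step P \<sigma> (send p q (MQC w S) \<sigma>)"
| combine: "\<lbrakk> p \<in> correct P; S \<subseteq> votes \<sigma> p w; nproc P - tmax (nproc P) \<le> card S \<rbrakk>
        \<Longrightarrow> step P \<sigma> (see_qc P p w S \<sigma>)"
| byz: "\<lbrakk> b < nproc P; b \<notin> correct P; q < nproc P; forgeable P \<sigma> pl \<rbrakk>
        \<Longrightarrow> step P \<sigma> (send b q pl \<sigma>)"

text \<open>Initial configuration: time 0, every correct processor is in (has entered) view 0, clocks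
  are at most c_0 = 0 and satisfy partial initial clock synchronisation.\<close>
definition init_cfg :: "params \<Rightarrow> cfg \<Rightarrow> bool" where
  "init_cfg P \<sigma> \<longleftrightarrow>
     now \<sigma> = 0 \<and>
     (\<forall>p\<in>correct P. clk \<sigma> p \<le> 0 \<and>
        tmax (nproc P) + 1 \<le> card {p' \<in> correct P. clk \<sigma> p - gam P \<le> clk \<sigma> p'}) \<and>
     cur \<sigma> = (\<lambda>_. 0) \<and> fired \<sigma> = (\<lambda>_. {}) \<and> seenQC \<sigma> = (\<lambda>_. {}) \<and> seenVC \<sigma> = (\<lambda>_. {}) \<and>
     qcs \<sigma> = (\<lambda>_. {}) \<and> votes \<sigma> = (\<lambda>_ _. {}) \<and> vrecv \<sigma> = (\<lambda>_ _. {}) \<and>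
     adv \<sigma> = {} \<and> transit \<sigma> = {} \<and>
     entered \<sigma> = {(p, 0, 0) | p. p \<in> correct P}"

definition fever_exec :: "params \<Rightarrow> (nat \<Rightarrow> cfg) \<Rightarrow> nat \<Rightarrow> bool" where
  "fever_exec P \<sigma> m \<longleftrightarrow>
     valid_params P \<and> init_cfg P (\<sigma> 0) \<and> (\<forall>i<m. step P (\<sigma> i) (\<sigma> (Suc i)))"

end

theory Submission
  imports Defs
begin

text \<open>
  A correct processor signs a view message or a vote share for view w only while in view w,
  and every message is delivered strictly after it was sent.  Hence any certificate a correct
  processor acts on at time T carries the signature of a correct processor that entered its view
  strictly before T.  By induction over the execution, whenever a correct processor enters a view
  above v, or its clock exceeds c_v, some correct processor has entered a view \<open>\<ge> v\<close> strictly
  earlier: an entry above v is triggered by a certificate or by a clock reaching c_w > c_v; a clock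
  passes c_v either by jumping forward on a certificate or by running through c_v, and since v is
  initial the latter fires rule (a) for v.  At the first time t at which a view \<open>\<ge> v\<close> is entered
  there is no such earlier entry, which gives (ii) and (iii), and then (i) from (ii).
\<close>

definition entered_before :: "(nat \<times> nat \<times> real) set \<Rightarrow> nat \<Rightarrow> nat \<Rightarrow> real \<Rightarrow> bool" where
  "entered_before E q w T \<longleftrightarrow> (\<exists>\<tau><T. (q, w, \<tau>) \<in> E)"

definition entered_by :: "(nat \<times> nat \<times> real) set \<Rightarrow> nat \<Rightarrow> nat \<Rightarrow> real \<Rightarrow> bool" where
  "entered_by E q w T \<longleftrightarrow> (\<exists>\<tau>\<le>T. (q, w, \<tau>) \<in> E)"

lemma entered_before_mono:
  "entered_before E q w T \<Longrightarrow> E \<subseteq> E' \<Longrightarrow> T \<le> T' \<Longrightarrow> entered_before E' q w T'"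
  unfolding entered_before_def by (meson less_le_trans subsetD)

lemma entered_by_mono:
  "entered_by E q w T \<Longrightarrow> E \<subseteq> E' \<Longrightarrow> T \<le> T' \<Longrightarrow> entered_by E' q w T'"
  unfolding entered_by_def by (meson order_trans subsetD)

lemma entered_by_before:
  "entered_by E q w T \<Longrightarrow> T < T' \<Longrightarrow> entered_before E q w T'"
  unfolding entered_by_def entered_before_def by (meson le_less_trans)

lemma entered_before_by: "entered_before E q w T \<Longrightarrow> entered_by E q w T"
  unfolding entered_by_def entered_before_def by (meson less_imp_le)

fun signers :: "payload \<Rightarrow> nat set" where
  "signers (MView w q) = {q}"
| "signers (MVote w q) = {q}"
| "signers (MQC w S) = S"
| "signers (MVC w S) = S"

fun signed_view :: "payload \<Rightarrow> nat" where
  "signed_view (MView w q) = w"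
| "signed_view (MVote w q) = w"
| "signed_view (MQC w S) = w"
| "signed_view (MVC w S) = w"

definition signed_before :: "params \<Rightarrow> (nat \<times> nat \<times> real) set \<Rightarrow> payload \<Rightarrow> real \<Rightarrow> bool" where
  "signed_before P E pl T \<longleftrightarrow> (\<forall>q \<in> signers pl \<inter> correct P. entered_before E q (signed_view pl) T)"

definition signed_by :: "params \<Rightarrow> (nat \<times> nat \<times> real) set \<Rightarrow> payload \<Rightarrow> real \<Rightarrow> bool" where
  "signed_by P E pl T \<longleftrightarrow> (\<forall>q \<in> signers pl \<inter> correct P. entered_by E q (signed_view pl) T)"

lemma signed_before_mono:
  "signed_before P E pl T \<Longrightarrow> E \<subseteq> E' \<Longrightarrow> T \<le> T' \<Longrightarrow> signed_before P E' pl T'"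
  unfolding signed_before_def using entered_before_mono by blast

lemma signed_by_mono:
  "signed_by P E pl T \<Longrightarrow> E \<subseteq> E' \<Longrightarrow> T \<le> T' \<Longrightarrow> signed_by P E' pl T'"
  unfolding signed_by_def using entered_by_mono by blast

lemma signed_by_before: "signed_by P E pl T \<Longrightarrow> T < T' \<Longrightarrow> signed_before P E pl T'"
  unfolding signed_by_def signed_before_def using entered_by_before by blast

lemma signed_before_by: "signed_before P E pl T \<Longrightarrow> signed_by P E pl T"
  unfolding signed_by_def signed_before_def using entered_before_by by blast

text \<open>
  A message in transit is only known to be signed by the time it was sent, because a correct
  processor sends its view message in the same instant in which it enters the view; delivery
  happens strictly later, so everything a processor has received is signed strictly before now.
\<close>
definition signatures_sound :: "params \<Rightarrow> cfg \<Rightarrow> bool" where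
  "signatures_sound P \<sigma> \<longleftrightarrow>
     (\<forall>p \<in> correct P. entered_by (entered \<sigma>) p (cur \<sigma> p) (now \<sigma>)) \<and>
     (\<forall>p \<in> correct P. \<forall>w \<in> fired \<sigma> p. entered_by (entered \<sigma>) p w (now \<sigma>)) \<and>
     (\<forall>p \<in> correct P. \<forall>w. votes \<sigma> p w \<subseteq> {..<nproc P} \<and>
        (\<forall>q \<in> votes \<sigma> p w. signed_before P (entered \<sigma>) (MVote w q) (now \<sigma>))) \<and>
     (\<forall>p \<in> correct P. \<forall>w. \<forall>q \<in> vrecv \<sigma> p w. signed_before P (entered \<sigma>) (MView w q) (now \<sigma>)) \<and>
     (\<forall>p \<in> correct P. \<forall>(w, S) \<in> qcs \<sigma> p. signed_before P (entered \<sigma>) (MQC w S) (now \<sigma>)) \<and>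
     (\<forall>pl \<in> adv \<sigma>. signed_before P (entered \<sigma>) pl (now \<sigma>)) \<and>
     (\<forall>m \<in> transit \<sigma>. signed_by P (entered \<sigma>) (pay m) (stime m))"

lemma signatures_sound_init: "init_cfg P \<sigma> \<Longrightarrow> signatures_sound P \<sigma>"
  by (auto simp: init_cfg_def signatures_sound_def entered_by_def)

lemma signatures_sound_send:
  "signatures_sound P \<sigma> \<Longrightarrow> signed_by P (entered \<sigma>) pl (now \<sigma>) \<Longrightarrow> signatures_sound P (send p q pl \<sigma>)"
  by (auto simp: signatures_sound_def send_def)

lemma entered_enter: "entered (enter p w c \<sigma>) = insert (p, w, now \<sigma>) (entered \<sigma>)"
  by (simp add: enter_def)

lemma now_enter: "now (enter p w c \<sigma>) = now \<sigma>"
  by (simp add: enter_def)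

lemma clk_enter: "clk (enter p w c \<sigma>) = (clk \<sigma>)(p := c)"
  by (simp add: enter_def)

lemma signatures_sound_grow:
  assumes sound: "signatures_sound P \<sigma>" and sub: "entered \<sigma> \<subseteq> E" and later: "now \<sigma> \<le> T"
  shows "signatures_sound P (\<sigma>\<lparr>entered := E, now := T\<rparr>)"
proof -
  note S = sound[unfolded signatures_sound_def]
  have "\<forall>p\<in>correct P. entered_by E p (cur \<sigma> p) T"
    using S by (blast dest: entered_by_mono[OF _ sub later])
  moreover have "\<forall>p\<in>correct P. \<forall>w\<in>fired \<sigma> p. entered_by E p w T"
    using S by (blast dest: entered_by_mono[OF _ sub later])
  moreover have "\<forall>p\<in>correct P. \<forall>w. votes \<sigma> p w \<subseteq> {..<nproc P} \<and>
          (\<forall>q\<in>votes \<sigma> p w. signed_before P E (MVote w q) T)"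
    using S by (blast dest: signed_before_mono[OF _ sub later])
  moreover have "\<forall>p\<in>correct P. \<forall>w. \<forall>q\<in>vrecv \<sigma> p w. signed_before P E (MView w q) T"
    using S by (blast dest: signed_before_mono[OF _ sub later])
  moreover have "\<forall>p\<in>correct P. \<forall>(w, S)\<in>qcs \<sigma> p. signed_before P E (MQC w S) T"
    using S by (fast dest: signed_before_mono[OF _ sub later])
  moreover have "\<forall>pl\<in>adv \<sigma>. signed_before P E pl T"
    using S by (blast dest: signed_before_mono[OF _ sub later])
  moreover have "\<forall>m\<in>transit \<sigma>. signed_by P E (pay m) (stime m)"
    using S by (blast dest: signed_by_mono[OF _ sub order_refl])
  ultimately show ?thesis by (simp add: signatures_sound_def)
qed

lemma signatures_sound_enter:
  assumes sound: "signatures_sound P \<sigma>" shows "signatures_sound P (enter p w c \<sigma>)"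
proof -
  let ?E = "insert (p, w, now \<sigma>) (entered \<sigma>)"
  have grown: "signatures_sound P (\<sigma>\<lparr>entered := ?E, now := now \<sigma>\<rparr>)"
    by (rule signatures_sound_grow[OF sound]) auto
  have "entered_by ?E p w (now \<sigma>)" by (auto simp: entered_by_def)
  with grown show ?thesis
    by (auto simp: signatures_sound_def enter_def)
qed

lemma signatures_sound_see_qc:
  assumes sound: "signatures_sound P \<sigma>"
    and qc: "signed_before P (entered \<sigma>) (MQC w S) (now \<sigma>)"
  shows "signatures_sound P (see_qc P p w S \<sigma>)"
proof -
  let ?\<sigma>1 = "\<sigma>\<lparr>qcs := (qcs \<sigma>)(p := insert (w, S) (qcs \<sigma> p))\<rparr>"
  have "signatures_sound P ?\<sigma>1" using sound qc by (auto simp: signatures_sound_def)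
  moreover have "signatures_sound P (?\<sigma>1\<lparr>seenQC := X\<rparr>)" for X
    using \<open>signatures_sound P ?\<sigma>1\<close> by (simp add: signatures_sound_def)
  ultimately show ?thesis unfolding see_qc_def Let_def by (auto intro: signatures_sound_enter)
qed

lemma signatures_sound_see_vc:
  assumes sound: "signatures_sound P \<sigma>" shows "signatures_sound P (see_vc P p w \<sigma>)"
proof -
  have "signatures_sound P (\<sigma>\<lparr>seenVC := X\<rparr>)" for X using sound by (simp add: signatures_sound_def)
  then show ?thesis using sound unfolding see_vc_def Let_def by (auto intro: signatures_sound_enter)
qed

lemma signatures_sound_recv_view:
  assumes sound: "signatures_sound P \<sigma>" and p: "p \<in> correct P"
    and view: "signed_before P (entered \<sigma>) (MView w q) (now \<sigma>)"
  shows "signatures_sound P (recv_view P p w q \<sigma>)"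
proof -
  let ?R = "insert q (vrecv \<sigma> p w)"
  let ?\<sigma>1 = "\<sigma>\<lparr>vrecv := (vrecv \<sigma>)(p := (vrecv \<sigma> p)(w := ?R))\<rparr>"
  have "\<forall>q' \<in> ?R. signed_before P (entered \<sigma>) (MView w q') (now \<sigma>)"
    using sound p view by (simp add: signatures_sound_def)
  then have vc: "signed_before P (entered \<sigma>) (MVC w ?R) (now \<sigma>)"
    by (auto simp: signed_before_def)
  have "signatures_sound P ?\<sigma>1" using sound view by (auto simp: signatures_sound_def)
  then show ?thesis using vc
    by (auto simp: recv_view_def Let_def signatures_sound_def dest: signed_before_by)
qed

lemma signatures_sound_recv:
  assumes sound: "signatures_sound P \<sigma>" and p: "p \<in> correct P"
    and pl: "signed_before P (entered \<sigma>) pl (now \<sigma>)"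
  shows "signatures_sound P (recv P p pl \<sigma>)"
proof (cases pl)
  case (MView w q)
  then show ?thesis using signatures_sound_recv_view[OF sound p] sound pl by (simp add: recv_def)
next
  case (MVote w q)
  then show ?thesis using sound pl by (auto simp: recv_def signatures_sound_def)
next
  case (MQC w S)
  then show ?thesis using signatures_sound_see_qc[OF sound] sound pl by (simp add: recv_def Let_def)
next
  case (MVC w S)
  then show ?thesis using signatures_sound_see_vc[OF sound] sound by (simp add: recv_def Let_def)
qed

lemma signed_by_forgeable:
  assumes sound: "signatures_sound P \<sigma>" and forge: "forgeable P \<sigma> pl"
  shows "signed_by P (entered \<sigma>) pl (now \<sigma>)"
proof -
  have adv: "signed_by P (entered \<sigma>) pl' (now \<sigma>)" if "pl' \<in> adv \<sigma>" for pl'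
    using sound that by (auto simp: signatures_sound_def intro: signed_before_by)
  show ?thesis
  proof (cases "pl \<in> adv \<sigma>")
    case False
    with forge have "\<forall>q \<in> signers pl \<inter> correct P. MView (signed_view pl) q \<in> adv \<sigma> \<or>
        MVote (signed_view pl) q \<in> adv \<sigma>"
      by (cases pl) (auto simp: forgeable_def)
    then show ?thesis using adv by (fastforce simp: signed_by_def)
  qed (rule adv)
qed

lemma signatures_sound_step:
  assumes sound: "signatures_sound P \<sigma>" and st: "step P \<sigma> \<sigma>'"
  shows "signatures_sound P \<sigma>'"
  using st
proof cases
  case (tick d)
  have "signatures_sound P (\<sigma>\<lparr>entered := entered \<sigma>, now := now \<sigma> + d\<rparr>)"
    using tick(2) by (intro signatures_sound_grow[OF sound]) auto
  then show ?thesis using tick(1) by (simp add: signatures_sound_def)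
next
  case (clock p w)
  let ?\<sigma>1 = "enter p w (clk \<sigma> p) \<sigma>"
  have new: "entered_by (entered ?\<sigma>1) p w (now ?\<sigma>1)"
    by (auto simp: entered_enter now_enter entered_by_def)
  have "signatures_sound P (?\<sigma>1\<lparr>fired := (fired ?\<sigma>1)(p := insert w (fired ?\<sigma>1 p))\<rparr>)"
    using signatures_sound_enter[OF sound] new by (auto simp: signatures_sound_def)
  moreover have "signed_by P (entered ?\<sigma>1) (MView w p) (now ?\<sigma>1)"
    using new by (simp add: signed_by_def)
  moreover have "enter p w (clk \<sigma> p) (\<sigma>\<lparr>fired := (fired \<sigma>)(p := insert w (fired \<sigma> p))\<rparr>) =
      ?\<sigma>1\<lparr>fired := (fired ?\<sigma>1)(p := insert w (fired ?\<sigma>1 p))\<rparr>"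
    by (simp add: enter_def)
  ultimately show ?thesis using clock(1) by (simp add: signatures_sound_send)
next
  case (deliver m)
  let ?\<sigma>0 = "\<sigma>\<lparr>transit := transit \<sigma> - {m}\<rparr>"
  have pl: "signed_before P (entered \<sigma>) (pay m) (now \<sigma>)"
    using sound deliver(2,3) by (auto simp: signatures_sound_def intro: signed_by_before)
  have "signatures_sound P ?\<sigma>0" using sound by (auto simp: signatures_sound_def)
  then show ?thesis
    using deliver(1) pl signatures_sound_recv[of P ?\<sigma>0] sound
    by (auto simp: signatures_sound_def)
next
  case (vote p q)
  then have "signed_by P (entered \<sigma>) (MVote (cur \<sigma> p) p) (now \<sigma>)"
    using sound by (simp add: signatures_sound_def signed_by_def)
  then show ?thesis using vote(1) by (simp add: signatures_sound_send[OF sound])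
next
  case (relay p w S q)
  then have "signed_before P (entered \<sigma>) (MQC w S) (now \<sigma>)"
    using sound by (fastforce simp: signatures_sound_def)
  then have "signed_by P (entered \<sigma>) (MQC w S) (now \<sigma>)" by (rule signed_before_by)
  then show ?thesis using relay(1) by (simp add: signatures_sound_send[OF sound])
next
  case (combine p S w)
  then have "signed_before P (entered \<sigma>) (MQC w S) (now \<sigma>)"
    using sound by (auto simp: signatures_sound_def signed_before_def)
  then show ?thesis using combine(1) by (simp add: signatures_sound_see_qc[OF sound])
next
  case (byz b q pl)
  then show ?thesis using sound by (simp add: signatures_sound_send signed_by_forgeable)
qed

definition reached_before :: "params \<Rightarrow> (nat \<times> nat \<times> real) set \<Rightarrow> nat \<Rightarrow> real \<Rightarrow> bool" where
  "reached_before P E v T \<longleftrightarrow> (\<exists>q \<in> correct P. \<exists>w \<ge> v. entered_before E q w T)"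

lemma reached_beforeI:
  "q \<in> correct P \<Longrightarrow> v \<le> w \<Longrightarrow> entered_before E q w T \<Longrightarrow> reached_before P E v T"
  unfolding reached_before_def by blast

lemma reached_before_mono:
  "reached_before P E v T \<Longrightarrow> E \<subseteq> E' \<Longrightarrow> T \<le> T' \<Longrightarrow> reached_before P E' v T'"
  unfolding reached_before_def by (meson entered_before_mono)

definition advance_justified :: "params \<Rightarrow> nat \<Rightarrow> cfg \<Rightarrow> bool" where
  "advance_justified P v \<sigma> \<longleftrightarrow>
     (\<forall>p \<in> correct P. cview (gam P) v < clk \<sigma> p \<longrightarrow> reached_before P (entered \<sigma>) v (now \<sigma>)) \<and>
     (\<forall>(p, w, \<tau>) \<in> entered \<sigma>. v < w \<longrightarrow> reached_before P (entered \<sigma>) v \<tau>)"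

lemma advance_justified_clockD:
  "advance_justified P v \<sigma> \<Longrightarrow> p \<in> correct P \<Longrightarrow> cview (gam P) v < clk \<sigma> p \<Longrightarrow>
   reached_before P (entered \<sigma>) v (now \<sigma>)"
  unfolding advance_justified_def by blast

lemma advance_justified_enteredD:
  "advance_justified P v \<sigma> \<Longrightarrow> (p, w, \<tau>) \<in> entered \<sigma> \<Longrightarrow> v < w \<Longrightarrow>
   reached_before P (entered \<sigma>) v \<tau>"
  unfolding advance_justified_def by blast

lemma advance_justified_cong:
  "entered \<sigma>' = entered \<sigma> \<Longrightarrow> clk \<sigma>' = clk \<sigma> \<Longrightarrow> now \<sigma>' = now \<sigma> \<Longrightarrow>
   advance_justified P v \<sigma>' \<longleftrightarrow> advance_justified P v \<sigma>"
  by (simp add: advance_justified_def)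

lemma advance_justified_init:
  assumes "valid_params P" "init_cfg P \<sigma>" shows "advance_justified P v \<sigma>"
proof -
  have "0 \<le> cview (gam P) v" using assms(1) by (simp add: valid_params_def cview_def)
  then show ?thesis using assms(2) by (fastforce simp: advance_justified_def init_cfg_def)
qed

lemma cview_less_iff: "0 < G \<Longrightarrow> cview G v < cview G w \<longleftrightarrow> v < w"
  by (simp add: cview_def)

lemma advance_justified_enter:
  assumes J: "advance_justified P v \<sigma>" and vp: "valid_params P"
    and c: "c \<le> max (clk \<sigma> p) (cview (gam P) w)"
    and w: "v < w \<longrightarrow> reached_before P (entered \<sigma>) v (now \<sigma>)"
  shows "advance_justified P v (enter p w c \<sigma>)"
proof -
  have sub: "entered \<sigma> \<subseteq> entered (enter p w c \<sigma>)" by (auto simp: entered_enter)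
  have clock: "reached_before P (entered \<sigma>) v (now \<sigma>)"
    if "p' \<in> correct P" "cview (gam P) v < clk (enter p w c \<sigma>) p'" for p'
  proof (cases "p' = p \<and> \<not> cview (gam P) v < clk \<sigma> p")
    case True
    with that c have "cview (gam P) v < cview (gam P) w" by (auto simp: clk_enter)
    then show ?thesis using w vp by (simp add: cview_less_iff valid_params_def)
  next
    case False
    with that(2) have "cview (gam P) v < clk \<sigma> p'" by (auto simp: clk_enter split: if_splits)
    then show ?thesis using J that(1) by (simp add: advance_justified_clockD)
  qed
  have entries: "reached_before P (entered \<sigma>) v \<tau>"
    if "(p', w', \<tau>) \<in> entered (enter p w c \<sigma>)" "v < w'" for p' w' \<tau>
    using that J w by (auto simp: advance_justified_def entered_enter)
  show ?thesis unfolding advance_justified_def now_enter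
    using clock entries by (blast dest: reached_before_mono[OF _ sub order_refl])
qed

lemma three_tmax_less: "1 \<le> n \<Longrightarrow> 3 * tmax n < n"
  unfolding tmax_def by (rule GreatestI_nat[where k = 0 and b = n]) auto

lemma quorum_has_correct:
  assumes vp: "valid_params P" and S: "S \<subseteq> {..<nproc P}" and big: "tmax (nproc P) < card S"
  shows "\<exists>q \<in> S. q \<in> correct P"
proof (rule ccontr)
  assume "\<not> ?thesis"
  with S have "S \<subseteq> {..<nproc P} - correct P" by auto
  then have "card S \<le> card ({..<nproc P} - correct P)" by (intro card_mono) auto
  also have "\<dots> \<le> tmax (nproc P)" using vp by (simp add: valid_params_def)
  finally show False using big by simp
qed

lemma qc_quorum_has_correct:
  assumes vp: "valid_params P" and S: "S \<subseteq> {..<nproc P}" and big: "nproc P - tmax (nproc P) \<le> card S"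
  shows "\<exists>q \<in> S. q \<in> correct P"
proof (rule quorum_has_correct[OF vp S])
  show "tmax (nproc P) < card S"
    using big three_tmax_less[of "nproc P"] vp by (simp add: valid_params_def)
qed

lemma advance_justified_certified_entry:
  assumes J: "advance_justified P v \<sigma>" and vp: "valid_params P"
    and cert: "\<exists>q \<in> correct P. entered_before (entered \<sigma>) q w (now \<sigma>)" and u: "u \<le> Suc w"
    and same: "entered \<sigma>' = entered \<sigma>" "clk \<sigma>' = clk \<sigma>" "now \<sigma>' = now \<sigma>"
  shows "advance_justified P v (enter p u (max (clk \<sigma> p) (cview (gam P) u)) \<sigma>')"
proof -
  have "v < u \<longrightarrow> reached_before P (entered \<sigma>) v (now \<sigma>)"
    using cert u reached_beforeI by (metis less_Suc_eq_le order_less_le_trans)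
  then show ?thesis
    using J vp advance_justified_enter[of P v \<sigma>'] advance_justified_cong[OF same] same by simp
qed

lemma advance_justified_see_qc:
  assumes J: "advance_justified P v \<sigma>" and vp: "valid_params P"
    and qc: "\<exists>q \<in> correct P. entered_before (entered \<sigma>) q w (now \<sigma>)"
  shows "advance_justified P v (see_qc P p w S \<sigma>)"
proof -
  have "advance_justified P v \<sigma>'"
    if "entered \<sigma>' = entered \<sigma>" "clk \<sigma>' = clk \<sigma>" "now \<sigma>' = now \<sigma>" for \<sigma>'
    using J advance_justified_cong[OF that] by simp
  with advance_justified_certified_entry[OF J vp qc, of "Suc w"] show ?thesis
    by (simp add: see_qc_def Let_def)
qed

lemma advance_justified_see_vc:
  assumes J: "advance_justified P v \<sigma>" and vp: "valid_params P"
    and vc: "\<exists>q \<in> correct P. entered_before (entered \<sigma>) q w (now \<sigma>)"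
  shows "advance_justified P v (see_vc P p w \<sigma>)"
proof -
  have "advance_justified P v \<sigma>'"
    if "entered \<sigma>' = entered \<sigma>" "clk \<sigma>' = clk \<sigma>" "now \<sigma>' = now \<sigma>" for \<sigma>'
    using J advance_justified_cong[OF that] by simp
  with advance_justified_certified_entry[OF J vp vc, of w] show ?thesis
    by (simp add: see_vc_def Let_def)
qed

lemma advance_justified_recv:
  assumes J: "advance_justified P v \<sigma>" and vp: "valid_params P"
    and pl: "signed_before P (entered \<sigma>) pl (now \<sigma>)"
  shows "advance_justified P v (recv P p pl \<sigma>)"
proof (cases pl)
  case (MView w q)
  then show ?thesis using J by (simp add: recv_def recv_view_def Let_def advance_justified_def)
next
  case (MVote w q)
  then show ?thesis using J by (simp add: recv_def advance_justified_def)
next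
  case (MQC w S)
  have "advance_justified P v (see_qc P p w S \<sigma>)"
    if "S \<subseteq> {..<nproc P}" "nproc P - tmax (nproc P) \<le> card S"
  proof (rule advance_justified_see_qc[OF J vp])
    show "\<exists>q \<in> correct P. entered_before (entered \<sigma>) q w (now \<sigma>)"
      using qc_quorum_has_correct[OF vp that] pl MQC by (auto simp: signed_before_def)
  qed
  then show ?thesis using J MQC by (simp add: recv_def Let_def)
next
  case (MVC w S)
  have "advance_justified P v (see_vc P p w \<sigma>)"
    if "S \<subseteq> {..<nproc P}" "tmax (nproc P) + 1 \<le> card S"
  proof (rule advance_justified_see_vc[OF J vp])
    show "\<exists>q \<in> correct P. entered_before (entered \<sigma>) q w (now \<sigma>)"
      using quorum_has_correct[OF vp that(1)] that(2) pl MVC by (auto simp: signed_before_def)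
  qed
  then show ?thesis using J MVC by (simp add: recv_def Let_def)
qed

lemma advance_justified_tick:
  assumes J: "advance_justified P v \<sigma>" and sound: "signatures_sound P \<sigma>"
    and v: "initial (kk P) v" and d: "0 < d"
    and no_skip: "\<forall>p \<in> correct P. \<forall>w. initial (kk P) w \<longrightarrow>
                    \<not> (clk \<sigma> p < cview (gam P) w \<and> cview (gam P) w < clk \<sigma> p + d)"
    and fire: "\<forall>p \<in> correct P. \<forall>w. initial (kk P) w \<and> clk \<sigma> p = cview (gam P) w \<longrightarrow> w \<in> fired \<sigma> p"
  shows "advance_justified P v (\<sigma>\<lparr>now := now \<sigma> + d, clk := (\<lambda>p. clk \<sigma> p + d)\<rparr>)"
proof -
  have "reached_before P (entered \<sigma>) v (now \<sigma> + d)"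
    if p: "p \<in> correct P" and late: "cview (gam P) v < clk \<sigma> p + d" for p
  proof (cases "cview (gam P) v < clk \<sigma> p")
    case True
    then have "reached_before P (entered \<sigma>) v (now \<sigma>)" using J p by (simp add: advance_justified_clockD)
    then show ?thesis using d by (auto intro: reached_before_mono)
  next
    case False
    \<comment> \<open>the clock cannot run past the initial-view time c_v, so it sits exactly at c_v\<close>
    with no_skip p late v have "clk \<sigma> p = cview (gam P) v" by force
    with fire p v have "v \<in> fired \<sigma> p" by blast
    with sound p have "entered_by (entered \<sigma>) p v (now \<sigma>)" by (simp add: signatures_sound_def)
    then have "entered_before (entered \<sigma>) p v (now \<sigma> + d)" using d by (simp add: entered_by_before)
    then show ?thesis using p by (auto intro: reached_beforeI)
  qed
  then show ?thesis using J by (simp add: advance_justified_def)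
qed

lemma advance_justified_step:
  assumes vp: "valid_params P" and v: "initial (kk P) v"
    and J: "advance_justified P v \<sigma>" and sound: "signatures_sound P \<sigma>" and st: "step P \<sigma> \<sigma>'"
  shows "advance_justified P v \<sigma>'"
  using st
proof cases
  case (tick d)
  then show ?thesis using advance_justified_tick[OF J sound v] by blast
next
  case (clock p w)
  have "v < w \<longrightarrow> reached_before P (entered \<sigma>) v (now \<sigma>)"
    using advance_justified_clockD[OF J clock(2)] clock(4) vp
    by (simp add: valid_params_def cview_less_iff)
  then have "advance_justified P v (enter p w (clk \<sigma> p) (\<sigma>\<lparr>fired := X\<rparr>))" for X
    using J vp advance_justified_enter[of P v "\<sigma>\<lparr>fired := X\<rparr>"] by (simp add: advance_justified_def)
  then show ?thesis using clock(1) by (simp add: send_def advance_justified_def enter_def)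
next
  case (deliver m)
  let ?\<sigma>0 = "\<sigma>\<lparr>transit := transit \<sigma> - {m}\<rparr>"
  have "signed_before P (entered \<sigma>) (pay m) (now \<sigma>)"
    using sound deliver(2,3) by (auto simp: signatures_sound_def intro: signed_by_before)
  then have "advance_justified P v (recv P (dst m) (pay m) ?\<sigma>0)"
    using J by (intro advance_justified_recv[OF _ vp]) (simp_all add: advance_justified_def)
  then show ?thesis using deliver(1) J by (simp add: advance_justified_def)
next
  case (combine p S w)
  have "S \<subseteq> {..<nproc P}" "\<forall>q \<in> S. signed_before P (entered \<sigma>) (MVote w q) (now \<sigma>)"
    using sound combine(2,3) unfolding signatures_sound_def by blast+
  then have "\<exists>q \<in> correct P. entered_before (entered \<sigma>) q w (now \<sigma>)"
    using qc_quorum_has_correct[OF vp _ combine(4)] by (fastforce simp: signed_before_def)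
  then show ?thesis using combine(1) advance_justified_see_qc[OF J vp] by simp
qed (use J in \<open>simp_all add: send_def advance_justified_def\<close>)

lemma entered_see_qc_mono: "entered \<sigma> \<subseteq> entered (see_qc P p w S \<sigma>)"
  by (auto simp: see_qc_def Let_def entered_enter)

lemma entered_see_vc_mono: "entered \<sigma> \<subseteq> entered (see_vc P p w \<sigma>)"
  by (auto simp: see_vc_def Let_def entered_enter)

lemma entered_recv_mono: "entered \<sigma> \<subseteq> entered (recv P p pl \<sigma>)"
  by (cases pl) (simp_all add: recv_def recv_view_def Let_def entered_see_qc_mono entered_see_vc_mono)

lemma step_entered_mono: "step P \<sigma> \<sigma>' \<Longrightarrow> entered \<sigma> \<subseteq> entered \<sigma>'"
proof (induction rule: step.cases)
  case (deliver m)
  then show ?case using entered_recv_mono[of "\<sigma>\<lparr>transit := transit \<sigma> - {m}\<rparr>"] by auto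
qed (auto simp: send_def entered_enter entered_see_qc_mono)

lemma fever_exec_invariants:
  assumes exec: "fever_exec P \<sigma> m" and v: "initial (kk P) v" and i: "i \<le> m"
  shows "signatures_sound P (\<sigma> i) \<and> advance_justified P v (\<sigma> i)"
  using i
proof (induction i)
  case 0
  then show ?case using exec signatures_sound_init advance_justified_init
    by (simp add: fever_exec_def)
next
  case (Suc i)
  then have inv: "signatures_sound P (\<sigma> i)" "advance_justified P v (\<sigma> i)" by simp_all
  from Suc.prems exec have st: "step P (\<sigma> i) (\<sigma> (Suc i))" and vp: "valid_params P"
    by (simp_all add: fever_exec_def)
  show ?case using signatures_sound_step[OF inv(1) st] advance_justified_step[OF vp v inv(2,1) st] ..
qed

lemma fever_exec_entered_mono:
  assumes exec: "fever_exec P \<sigma> m" and "i \<le> m"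
  shows "entered (\<sigma> i) \<subseteq> entered (\<sigma> m)"
proof -
  have "entered (\<sigma> (min j m)) \<subseteq> entered (\<sigma> (min (Suc j) m))" for j
  proof (cases "j < m")
    case True
    with exec have "step P (\<sigma> j) (\<sigma> (Suc j))" by (simp add: fever_exec_def)
    with True show ?thesis by (simp add: step_entered_mono)
  qed simp
  then have "entered (\<sigma> (min i m)) \<subseteq> entered (\<sigma> (min m m))"
    using lift_Suc_mono_le[of "\<lambda>j. entered (\<sigma> (min j m))"] \<open>i \<le> m\<close> by blast
  then show ?thesis using \<open>i \<le> m\<close> by simp
qed

theorem lemma2:
  fixes P :: params and \<sigma> :: "nat \<Rightarrow> cfg" and m :: nat and v :: nat and t :: real
  assumes exec: "fever_exec P \<sigma> m"
    and init_v: "initial (kk P) v"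
    and reached: "\<exists>p w. p \<in> correct P \<and> v \<le> w \<and> (p, w, t) \<in> entered (\<sigma> m)"
    and first: "\<forall>p w \<tau>. p \<in> correct P \<and> v \<le> w \<and> (p, w, \<tau>) \<in> entered (\<sigma> m) \<longrightarrow> t \<le> \<tau>"
  shows "(\<exists>p \<in> correct P. (p, v, t) \<in> entered (\<sigma> m))
       \<and> (\<forall>p \<in> correct P. \<forall>w. v < w \<longrightarrow> (p, w, t) \<notin> entered (\<sigma> m))
       \<and> (\<forall>i \<le> m. \<forall>p \<in> correct P. now (\<sigma> i) = t \<longrightarrow> clk (\<sigma> i) p \<le> cview (gam P) v)"
proof -
  have not_reached: "\<not> reached_before P (entered (\<sigma> m)) v t"
    using first by (force simp: reached_before_def entered_before_def)
  have J: "advance_justified P v (\<sigma> i)" if "i \<le> m" for i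
    using fever_exec_invariants[OF exec init_v that] by blast
  have above: "\<forall>p \<in> correct P. \<forall>w. v < w \<longrightarrow> (p, w, t) \<notin> entered (\<sigma> m)"
    using advance_justified_enteredD[OF J[OF order_refl]] not_reached by blast
  moreover have "\<exists>p \<in> correct P. (p, v, t) \<in> entered (\<sigma> m)"
    using reached above le_neq_implies_less by blast
  moreover have "clk (\<sigma> i) p \<le> cview (gam P) v"
    if "i \<le> m" "p \<in> correct P" "now (\<sigma> i) = t" for i p
    using advance_justified_clockD[OF J[OF that(1)] that(2)] that(3) not_reached
      reached_before_mono[OF _ fever_exec_entered_mono[OF exec that(1)] order_refl] by force
  ultimately show ?thesis by blast
qed

end
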